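(* Let $H$ be a separable Hilbert space with inner product $\langle\cdot,\cdot\rangle$ and norm $\|\cdot\|$, and let $A$ be a positive self-adjoint operator on $H$ with compact inverse, with orthonormal eigenfunctions $(w_n)$ and eigenvalues $0<\lambda_1\le\lambda_2\le\cdots$. Let $\mathcal L$ be a Banach space satisfying: (i) for some $\gamma>0$, either $D(A^\gamma)\subset\mathcal L\subset H$ or $H\subset\mathcal L\subset D(A^{-\gamma})$, with continuous inclusions; (ii) there is a constant $C_{\mathcal L}>0$ with $\|e^{-\theta A}u\|_{\mathcal L}\le C_{\mathcal L}\|u\|_{\mathcal L}$ for all $\theta\ge0$ and $u\in\mathcal L$, and $\|e^{-\theta A}u-u\|_{\mathcal L}\to0$ as $\theta\to0^+$ for each $u\in\mathcal L$. For $\theta>0$ set $\Pi_\theta u:=\sum_{\lambda_n<\theta^{-2}}e^{-\theta\lambda_n}\langle u,w_n\rangle w_n$. Then (i) the range of $\Pi_\theta$ is the linear span of finitely many eigenfunctions of $A$, so in particular $\Pi_\theta u\in D(A^\alpha)$ for every $\alpha\in\mathbb R$; and (ii) if $X=\mathcal L$ or $X=D(A^\alpha)$ for any $\alpha\in\mathbb R$, then (a) $\Pi_\theta$ is a bounded operator on $X$, uniformly for $\theta>0$, and (b) for every $u\in X$, $\Pi_\theta u\to u$ in $X$ as $\theta\to0^+$.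
   Context: For $\alpha\ge0$, $D(A^\alpha)=\{u=\sum_j\hat u_jw_j:\ \sum_j\lambda_j^{2\alpha}|\hat u_j|^2<\infty\}$ with norm $\|u\|_{D(A^\alpha)}^2=\sum_j\lambda_j^{2\alpha}|\hat u_j|^2$; for $\alpha<0$, $D(A^\alpha)$ is the dual of $D(A^{-\alpha})$, equivalently the completion of finite sums $\sum_j\hat u_jw_j$ in the norm given by the same formula. The semigroup is $e^{-\theta A}u=\sum_j e^{-\theta\lambda_j}\hat u_j w_j$ for $\theta\ge0$, where $\hat u_j=\langle u,w_j\rangle$ (interpreted via the pairing of $D(A^\alpha)$ with $D(A^{-\alpha})$ when $\alpha<0$); the same interpretation of $\langle u,w_n\rangle$ is used in $\Pi_\theta$. *)

theory Defs
  imports "HOL-Analysis.Analysis"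
begin

text \<open>Everything is expressed through the spectral data of A: an orthonormal
basis w of H of eigenfunctions and the eigenvalues lam (indexed from 0,
i.e. lam 0 is the paper's lambda_1). Elements of D(A^alpha) (for every real
alpha, including the completions for alpha < 0) are represented by their
coefficient sequences (u_hat j) = (pairing of u with w j).\<close>

type_synonym coeffs = "nat \<Rightarrow> real"

definition coeff :: "(nat \<Rightarrow> 'h::real_inner) \<Rightarrow> 'h \<Rightarrow> coeffs" where
  "coeff w u = (\<lambda>j. inner u (w j))"

definition DomA :: "(nat \<Rightarrow> real) \<Rightarrow> real \<Rightarrow> coeffs set" where
  "DomA lam \<alpha> = {c. summable (\<lambda>j. lam j powr (2 * \<alpha>) * (c j)\<^sup>2)}"

definition normDA :: "(nat \<Rightarrow> real) \<Rightarrow> real \<Rightarrow> coeffs \<Rightarrow> real" where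
  "normDA lam \<alpha> c = sqrt (\<Sum>j. lam j powr (2 * \<alpha>) * (c j)\<^sup>2)"

definition semigrp :: "(nat \<Rightarrow> real) \<Rightarrow> real \<Rightarrow> coeffs \<Rightarrow> coeffs" where
  "semigrp lam \<theta> c = (\<lambda>j. exp (- \<theta> * lam j) * c j)"

definition Pi_theta :: "(nat \<Rightarrow> real) \<Rightarrow> real \<Rightarrow> coeffs \<Rightarrow> coeffs" where
  "Pi_theta lam \<theta> c = (\<lambda>j. if lam j < 1 / \<theta>\<^sup>2 then exp (- \<theta> * lam j) * c j else 0)"

definition banach_space_on :: "coeffs set \<Rightarrow> (coeffs \<Rightarrow> real) \<Rightarrow> bool" where
  "banach_space_on L nL \<longleftrightarrow>
     (\<lambda>j. 0) \<in> L \<and>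
     (\<forall>x\<in>L. \<forall>y\<in>L. (\<lambda>j. x j + y j) \<in> L) \<and>
     (\<forall>x\<in>L. \<forall>a::real. (\<lambda>j. a * x j) \<in> L) \<and>
     (\<forall>x\<in>L. \<forall>y\<in>L. nL (\<lambda>j. x j + y j) \<le> nL x + nL y) \<and>
     (\<forall>x\<in>L. \<forall>a::real. nL (\<lambda>j. a * x j) = \<bar>a\<bar> * nL x) \<and>
     (\<forall>x\<in>L. nL x = 0 \<longleftrightarrow> x = (\<lambda>j. 0)) \<and>
     (\<forall>X. (\<forall>n. X n \<in> L) \<longrightarrow>
          (\<forall>e>0. \<exists>N. \<forall>m\<ge>N. \<forall>n\<ge>N. nL (\<lambda>j. X m j - X n j) < e) \<longrightarrow>
          (\<exists>x\<in>L. (\<lambda>n. nL (\<lambda>j. X n j - x j)) \<longlonglongrightarrow> 0))"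

definition cont_incl :: "coeffs set \<Rightarrow> (coeffs \<Rightarrow> real) \<Rightarrow> coeffs set \<Rightarrow> (coeffs \<Rightarrow> real) \<Rightarrow> bool" where
  "cont_incl S nS T nT \<longleftrightarrow> S \<subseteq> T \<and> (\<exists>K>0. \<forall>c\<in>S. nT c \<le> K * nS c)"

end

theory Submission
  imports Defs "HOL-Real_Asymp.Real_Asymp"
begin

(*
  Coefficientwise, Pi_theta multiplies u_j by exp (-theta lam_j) on the finitely many modes with
  lam_j < theta^-2 and by 0 on all others. This gives (i) at once; and on D(A^alpha) the multipliers
  lie in [0, 1] and tend to 1 as theta -> 0+, so Pi_theta is a contraction there and converges to
  the identity by dominated convergence (Tannery's theorem).

  On L, write Pi_theta = e^(-theta A) - T_theta, where the tail T_theta keeps exp (-theta lam_j) only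
  on the modes lam_j >= theta^-2. On those modes lam^gamma exp (-theta lam) <= M min theta 1, so
  T_theta maps D(A^alpha) to D(A^(alpha + gamma)) with norm O(min theta 1). Routing it through the
  continuous inclusions L -> H -> D(A^gamma) -> L, resp. L -> D(A^-gamma) -> H -> L, makes the tail
  O(min theta 1) on L, and the two semigroup hypotheses then give boundedness and convergence.
*)

lemma powr_mult_exp_neg_bounded:
  fixes k :: real
  assumes "0 \<le> k"
  shows "\<exists>M. \<forall>t>0. t powr k * exp (- t) \<le> M"
proof -
  have "((\<lambda>t::real. t powr k * exp (- t)) \<longlongrightarrow> 0) at_top"
    by real_asymp
  then have "eventually (\<lambda>t. t powr k * exp (- t) < 1) at_top"
    by (rule order_tendstoD) simp
  then obtain T where T: "\<And>t. T \<le> t \<Longrightarrow> t powr k * exp (- t) < 1"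
    by (auto simp: eventually_at_top_linorder)
  have "t powr k * exp (- t) \<le> max 1 (T powr k)" if "0 < t" for t
  proof (cases "T \<le> t")
    case True
    then show ?thesis using T by fastforce
  next
    case False
    have "t powr k * exp (- t) \<le> T powr k * 1"
      using False that assms by (intro mult_mono powr_mono2) auto
    then show ?thesis by simp
  qed
  then show ?thesis by blast
qed

lemma powr_mult_exp_neg_le_min:
  fixes \<gamma> :: real
  assumes "0 \<le> \<gamma>"
  shows "\<exists>M\<ge>0. \<forall>\<theta>>0. \<forall>l. 1 / \<theta>\<^sup>2 \<le> l \<longrightarrow> l powr \<gamma> * exp (- \<theta> * l) \<le> M * min \<theta> 1"
proof -
  obtain M1 where M1: "\<And>t. 0 < t \<Longrightarrow> t powr (2 * \<gamma>) * exp (- t) \<le> M1"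
    using powr_mult_exp_neg_bounded[of "2 * \<gamma>"] assms by auto
  obtain M2 where M2: "\<And>t. 0 < t \<Longrightarrow> t powr (2 * \<gamma> + 1) * exp (- t) \<le> M2"
    using powr_mult_exp_neg_bounded[of "2 * \<gamma> + 1"] assms by auto
  have "0 < 1 powr (2 * \<gamma>) * exp (- 1)" by simp
  then have M_nonneg: "0 \<le> max M1 M2" using M1[of 1] by linarith
  have "l powr \<gamma> * exp (- \<theta> * l) \<le> max M1 M2 * min \<theta> 1"
    if \<theta>: "0 < \<theta>" and l: "1 / \<theta>\<^sup>2 \<le> l" for \<theta> l
  proof -
    (* With t = theta l the hypothesis reads theta t >= 1, hence l <= t^2: so l^gamma e^-t is at most
       t^(2 gamma) e^-t, which is bounded, and at most theta t^(2 gamma + 1) e^-t = O(theta). *)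
    define t where "t = \<theta> * l"
    have "0 < 1 / \<theta>\<^sup>2" using \<theta> by simp
    then have "0 < l" using l by linarith
    then have "0 < t" using \<theta> by (simp add: t_def)
    have "1 \<le> \<theta>\<^sup>2 * l" using \<theta> l by (simp add: field_simps)
    then have \<theta>t: "1 \<le> \<theta> * t" by (simp add: t_def power2_eq_square mult.assoc)
    have "t * t = (\<theta> * t) * l" by (simp add: t_def ac_simps)
    moreover have "1 * l \<le> (\<theta> * t) * l" using \<theta>t \<open>0 < l\<close> by (intro mult_right_mono) auto
    ultimately have "l \<le> t * t" by (simp only: mult.left_neutral)
    then have "l powr \<gamma> \<le> (t * t) powr \<gamma>" using \<open>0 < l\<close> assms by (intro powr_mono2) auto
    also have "\<dots> = t powr (2 * \<gamma>)" unfolding powr_mult mult_2 by (rule powr_add[symmetric])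
    finally have lt: "l powr \<gamma> * exp (- t) \<le> t powr (2 * \<gamma>) * exp (- t)" by simp
    have bounded: "l powr \<gamma> * exp (- t) \<le> M1" using lt M1[OF \<open>0 < t\<close>] by linarith
    have "t powr (2 * \<gamma>) * exp (- t) \<le> t powr (2 * \<gamma>) * exp (- t) * (\<theta> * t)"
      using mult_left_mono[OF \<theta>t, of "t powr (2 * \<gamma>) * exp (- t)"] by simp
    with lt have "l powr \<gamma> * exp (- t) \<le> t powr (2 * \<gamma>) * exp (- t) * (\<theta> * t)"
      by (rule order_trans)
    also have "\<dots> = \<theta> * (t powr (2 * \<gamma> + 1) * exp (- t))"
      using \<open>0 < t\<close> by (simp add: powr_add)
    also have "\<dots> \<le> \<theta> * M2" using M2[OF \<open>0 < t\<close>] \<theta> by simp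
    finally have decay: "l powr \<gamma> * exp (- t) \<le> \<theta> * M2" .
    have "\<theta> * M2 \<le> \<theta> * max M1 M2" using \<theta> by (intro mult_left_mono) auto
    then show ?thesis
      using bounded decay M_nonneg by (auto simp: t_def min_def mult.commute)
  qed
  then show ?thesis using M_nonneg by blast
qed

lemma DomA_normDA_le_if_dominated:
  assumes c: "c \<in> DomA lam \<alpha>" and b: "0 \<le> b"
    and dom: "\<And>j. lam j powr \<beta> * \<bar>d j\<bar> \<le> b * (lam j powr \<alpha> * \<bar>c j\<bar>)"
  shows "d \<in> DomA lam \<beta>" and "normDA lam \<beta> d \<le> b * normDA lam \<alpha> c"
proof -
  have sq: "x powr (2 * a) * y\<^sup>2 = (x powr a * \<bar>y\<bar>)\<^sup>2" for x a y :: real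
    unfolding mult_2 powr_add by (simp add: power_mult_distrib power2_eq_square)
  have le: "lam j powr (2 * \<beta>) * (d j)\<^sup>2 \<le> b\<^sup>2 * (lam j powr (2 * \<alpha>) * (c j)\<^sup>2)" for j
    unfolding sq power_mult_distrib[symmetric] by (rule power_mono[OF dom]) simp
  have sc: "summable (\<lambda>j. lam j powr (2 * \<alpha>) * (c j)\<^sup>2)" using c by (simp add: DomA_def)
  then have sbc: "summable (\<lambda>j. b\<^sup>2 * (lam j powr (2 * \<alpha>) * (c j)\<^sup>2))" by (rule summable_mult)
  have sd: "summable (\<lambda>j. lam j powr (2 * \<beta>) * (d j)\<^sup>2)"
    by (rule summable_comparison_test[OF _ sbc]) (use le in auto)
  then show "d \<in> DomA lam \<beta>" by (simp add: DomA_def)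
  have "(\<Sum>j. lam j powr (2 * \<beta>) * (d j)\<^sup>2) \<le> b\<^sup>2 * (\<Sum>j. lam j powr (2 * \<alpha>) * (c j)\<^sup>2)"
    using suminf_le[OF le sd sbc] suminf_mult[OF sc] by simp
  then have "normDA lam \<beta> d \<le> sqrt (b\<^sup>2 * (\<Sum>j. lam j powr (2 * \<alpha>) * (c j)\<^sup>2))"
    unfolding normDA_def by (rule real_sqrt_le_mono)
  also have "\<dots> = b * normDA lam \<alpha> c" using b by (simp add: normDA_def real_sqrt_mult)
  finally show "normDA lam \<beta> d \<le> b * normDA lam \<alpha> c" .
qed

lemma normDA_tendsto_0_dominated:
  assumes c: "c \<in> DomA lam \<alpha>" and F: "F \<noteq> bot"
    and lim: "\<And>j. ((\<lambda>x. d x j) \<longlongrightarrow> 0) F"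
    and dom: "eventually (\<lambda>x. \<forall>j. \<bar>d x j\<bar> \<le> \<bar>c j\<bar>) F"
  shows "((\<lambda>x. normDA lam \<alpha> (d x)) \<longlongrightarrow> 0) F"
proof -
  have sc: "summable (\<lambda>j. lam j powr (2 * \<alpha>) * (c j)\<^sup>2)" using c by (simp add: DomA_def)
  have term_lim: "((\<lambda>x. lam j powr (2 * \<alpha>) * (d x j)\<^sup>2) \<longlongrightarrow> 0) F" for j
  proof -
    have "((\<lambda>x. (d x j)\<^sup>2) \<longlongrightarrow> 0) F" using tendsto_power[OF lim[of j], of 2] by simp
    then show ?thesis by (rule tendsto_mult_right_zero)
  qed
  have bound: "lam j powr (2 * \<alpha>) * (d x j)\<^sup>2 \<le> lam j powr (2 * \<alpha>) * (c j)\<^sup>2"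
    if "\<forall>j. \<bar>d x j\<bar> \<le> \<bar>c j\<bar>" for j x
  proof -
    have "(d x j)\<^sup>2 \<le> (c j)\<^sup>2" using that by (simp add: abs_le_square_iff)
    then show ?thesis by (simp add: mult_left_mono)
  qed
  have "eventually (\<lambda>(j, x). norm (lam j powr (2 * \<alpha>) * (d x j)\<^sup>2) \<le> lam j powr (2 * \<alpha>) * (c j)\<^sup>2)
          (at_top \<times>\<^sub>F F)"
    by (rule eventually_mono[OF eventually_prodI[OF eventually_True dom]]) (auto intro: bound)
  from tannerys_theorem[OF term_lim this sc F]
  have "((\<lambda>x. \<Sum>j. lam j powr (2 * \<alpha>) * (d x j)\<^sup>2) \<longlongrightarrow> 0) F" by simp
  from tendsto_real_sqrt[OF this] show ?thesis by (simp add: normDA_def)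
qed

lemma coeff_sum_orthonormal:
  assumes ortho: "\<And>i j. inner (w i) (w j) = (if i = j then 1 else 0)"
    and F: "finite F" and supp: "\<And>j. j \<notin> F \<Longrightarrow> c j = 0"
  shows "coeff w (\<Sum>i\<in>F. c i *\<^sub>R w i) = c"
proof
  fix j
  have "coeff w (\<Sum>i\<in>F. c i *\<^sub>R w i) j = (\<Sum>i\<in>F. c i * inner (w i) (w j))"
    by (simp add: coeff_def inner_sum_left)
  also have "\<dots> = (\<Sum>i\<in>F. if i = j then c i else 0)"
    by (rule sum.cong) (simp_all add: ortho)
  also have "\<dots> = c j" using F supp by simp
  finally show "coeff w (\<Sum>i\<in>F. c i *\<^sub>R w i) j = c j" .
qed

lemma finite_support_in_DomA:
  assumes "finite F" and "\<And>j. j \<notin> F \<Longrightarrow> c j = 0"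
  shows "c \<in> DomA lam \<alpha>"
  unfolding DomA_def by (auto intro: summable_finite[OF assms(1)] simp: assms(2))

lemma finite_sublevel_if_filterlim_at_top:
  fixes lam :: "nat \<Rightarrow> real"
  assumes "filterlim lam at_top sequentially"
  shows "finite {j. lam j < b}"
proof -
  have "eventually (\<lambda>j. b \<le> lam j) sequentially"
    using assms by (simp add: filterlim_at_top)
  then obtain N where N: "\<And>j. N \<le> j \<Longrightarrow> b \<le> lam j"
    unfolding eventually_sequentially by blast
  have "{j. lam j < b} \<subseteq> {..<N}"
  proof
    fix j assume "j \<in> {j. lam j < b}"
    then show "j \<in> {..<N}" using N[of j] by (cases "N \<le> j") auto
  qed
  then show ?thesis by (rule finite_subset) simp
qed

lemma banach_space_on_diff:
  assumes L: "banach_space_on L nL" and x: "x \<in> L" and y: "y \<in> L"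
  shows "(\<lambda>j. x j - y j) \<in> L" and "nL (\<lambda>j. x j - y j) \<le> nL x + nL y"
proof -
  have add: "\<And>x y. x \<in> L \<Longrightarrow> y \<in> L \<Longrightarrow> (\<lambda>j. x j + y j) \<in> L \<and> nL (\<lambda>j. x j + y j) \<le> nL x + nL y"
    and scale: "\<And>x a. x \<in> L \<Longrightarrow> (\<lambda>j. a * x j) \<in> L \<and> nL (\<lambda>j. a * x j) = \<bar>a\<bar> * nL x"
    using L unfolding banach_space_on_def by blast+
  from scale[OF y, of "- 1"] have "(\<lambda>j. - y j) \<in> L" "nL (\<lambda>j. - y j) = nL y" by simp_all
  with add[OF x, of "\<lambda>j. - y j"]
  show "(\<lambda>j. x j - y j) \<in> L" and "nL (\<lambda>j. x j - y j) \<le> nL x + nL y" by simp_all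
qed

lemma banach_space_on_nonneg:
  assumes L: "banach_space_on L nL" and x: "x \<in> L"
  shows "0 \<le> nL x"
proof -
  have "nL (\<lambda>j. 0) = 0" using L by (simp add: banach_space_on_def)
  moreover have "nL (\<lambda>j. x j - x j) \<le> nL x + nL x" by (rule banach_space_on_diff(2)[OF L x x])
  ultimately show ?thesis by simp
qed

lemma cont_incl_transfer_bound:
  assumes S: "cont_incl S nS L nL" and T: "cont_incl L nL T nT"
  shows "\<exists>K>0. \<forall>f b. 0 \<le> b \<longrightarrow> (\<forall>c\<in>T. f c \<in> S \<and> nS (f c) \<le> b * nT c) \<longrightarrow>
           (\<forall>u\<in>L. f u \<in> L \<and> nL (f u) \<le> K * b * nL u)"
proof -
  obtain K1 where K1: "0 < K1" "S \<subseteq> L" "\<And>c. c \<in> S \<Longrightarrow> nL c \<le> K1 * nS c"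
    using S by (auto simp: cont_incl_def)
  obtain K2 where K2: "0 < K2" "L \<subseteq> T" "\<And>c. c \<in> L \<Longrightarrow> nT c \<le> K2 * nL c"
    using T by (auto simp: cont_incl_def)
  have "f u \<in> L \<and> nL (f u) \<le> K1 * K2 * b * nL u"
    if b: "0 \<le> b" and f: "\<forall>c\<in>T. f c \<in> S \<and> nS (f c) \<le> b * nT c" and u: "u \<in> L" for f b u
  proof -
    have fS: "f u \<in> S" "nS (f u) \<le> b * nT u" using f K2(2) u by auto
    have "nL (f u) \<le> K1 * nS (f u)" using K1(3)[OF fS(1)] .
    also have "\<dots> \<le> K1 * (b * (K2 * nL u))"
    proof (rule mult_left_mono)
      show "nS (f u) \<le> b * (K2 * nL u)" using fS(2) mult_left_mono[OF K2(3)[OF u] b] by linarith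
    qed (use K1(1) in simp)
    finally show ?thesis using fS(1) K1(2) by (auto simp: ac_simps)
  qed
  moreover have "0 < K1 * K2" using K1 K2 by simp
  ultimately show ?thesis by blast
qed

lemma Pi_theta_vanishes_above:
  assumes "\<not> lam j < 1 / \<theta>\<^sup>2"
  shows "Pi_theta lam \<theta> u j = 0"
  using assms by (simp add: Pi_theta_def)

lemma Pi_theta_eq_coeff_sum:
  assumes ortho: "\<And>i j. inner (w i) (w j) = (if i = j then 1 else 0)"
    and lam: "filterlim lam at_top sequentially"
  shows "Pi_theta lam \<theta> u = coeff w (\<Sum>j\<in>{j. lam j < 1 / \<theta>\<^sup>2}. Pi_theta lam \<theta> u j *\<^sub>R w j)"
  using coeff_sum_orthonormal[OF ortho finite_sublevel_if_filterlim_at_top[OF lam]]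
    Pi_theta_vanishes_above by simp

lemma Pi_theta_in_DomA:
  assumes "filterlim lam at_top sequentially"
  shows "Pi_theta lam \<theta> u \<in> DomA lam \<alpha>"
  using finite_sublevel_if_filterlim_at_top[OF assms] Pi_theta_vanishes_above
  by (rule finite_support_in_DomA) simp

lemma abs_Pi_theta_le:
  assumes "0 \<le> \<theta>" and "0 \<le> lam j"
  shows "\<bar>Pi_theta lam \<theta> c j\<bar> \<le> \<bar>c j\<bar>"
    and "\<bar>Pi_theta lam \<theta> c j - c j\<bar> \<le> \<bar>c j\<bar>"
proof -
  define e where "e = exp (- \<theta> * lam j)"
  have e: "0 < e" "e \<le> 1" using assms by (auto simp: e_def)
  have "\<bar>e * c j\<bar> \<le> \<bar>c j\<bar>" using e by (simp add: abs_mult mult_left_le_one_le)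
  then show "\<bar>Pi_theta lam \<theta> c j\<bar> \<le> \<bar>c j\<bar>" by (simp add: Pi_theta_def e_def)
  have "e * c j - c j = - ((1 - e) * c j)" by (simp add: algebra_simps)
  then have "\<bar>e * c j - c j\<bar> = (1 - e) * \<bar>c j\<bar>" using e by (simp add: abs_mult)
  also have "\<dots> \<le> \<bar>c j\<bar>" using e by (simp add: mult_left_le_one_le)
  finally show "\<bar>Pi_theta lam \<theta> c j - c j\<bar> \<le> \<bar>c j\<bar>" by (simp add: Pi_theta_def e_def)
qed

lemma Pi_theta_tendsto_coeff: "((\<lambda>\<theta>. Pi_theta lam \<theta> c j) \<longlongrightarrow> c j) (at_right 0)"
proof -
  have "filterlim (\<lambda>\<theta>::real. 1 / \<theta>\<^sup>2) at_top (at_right 0)" by real_asymp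
  then have "eventually (\<lambda>\<theta>. lam j < 1 / \<theta>\<^sup>2) (at_right 0)"
    by (simp add: filterlim_at_top_dense)
  then have "eventually (\<lambda>\<theta>. exp (- \<theta> * lam j) * c j = Pi_theta lam \<theta> c j) (at_right 0)"
    by eventually_elim (simp add: Pi_theta_def)
  moreover have "((\<lambda>\<theta>. exp (- \<theta> * lam j) * c j) \<longlongrightarrow> exp (- 0 * lam j) * c j) (at_right 0)"
    by (intro tendsto_intros)
  ultimately show ?thesis by (simp add: tendsto_cong)
qed

lemma Pi_theta_DomA_uniformly_bounded:
  assumes lam: "\<And>j. 0 \<le> lam j"
  shows "\<exists>C. \<forall>\<theta>>0. \<forall>u\<in>DomA lam \<alpha>. Pi_theta lam \<theta> u \<in> DomA lam \<alpha> \<and>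
           normDA lam \<alpha> (Pi_theta lam \<theta> u) \<le> C * normDA lam \<alpha> u"
proof (intro exI[of _ 1] allI impI ballI)
  fix \<theta> :: real and u assume "0 < \<theta>" and u: "u \<in> DomA lam \<alpha>"
  have "lam j powr \<alpha> * \<bar>Pi_theta lam \<theta> u j\<bar> \<le> 1 * (lam j powr \<alpha> * \<bar>u j\<bar>)" for j
    using abs_Pi_theta_le(1)[of \<theta> lam j] \<open>0 < \<theta>\<close> lam by (simp add: mult_left_mono)
  from DomA_normDA_le_if_dominated[OF u zero_le_one this]
  show "Pi_theta lam \<theta> u \<in> DomA lam \<alpha> \<and> normDA lam \<alpha> (Pi_theta lam \<theta> u) \<le> 1 * normDA lam \<alpha> u"
    by simp
qed

lemma Pi_theta_tendsto_DomA:
  assumes "\<And>j. 0 \<le> lam j" and u: "u \<in> DomA lam \<alpha>"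
  shows "((\<lambda>\<theta>. normDA lam \<alpha> (\<lambda>j. Pi_theta lam \<theta> u j - u j)) \<longlongrightarrow> 0) (at_right 0)"
proof (rule normDA_tendsto_0_dominated[OF u])
  show "((\<lambda>\<theta>. Pi_theta lam \<theta> u j - u j) \<longlongrightarrow> 0) (at_right 0)" for j
    using Pi_theta_tendsto_coeff[of lam u j] by (simp add: LIM_zero)
  show "eventually (\<lambda>\<theta>. \<forall>j. \<bar>Pi_theta lam \<theta> u j - u j\<bar> \<le> \<bar>u j\<bar>) (at_right 0)"
    using eventually_at_right_less[of "0::real"]
    by eventually_elim (use abs_Pi_theta_le(2) assms(1) in \<open>auto intro: less_imp_le\<close>)
qed simp

definition spectral_tail :: "(nat \<Rightarrow> real) \<Rightarrow> real \<Rightarrow> coeffs \<Rightarrow> coeffs" where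
  "spectral_tail lam \<theta> c = (\<lambda>j. if lam j < 1 / \<theta>\<^sup>2 then 0 else exp (- \<theta> * lam j) * c j)"

lemma Pi_theta_eq_semigrp_minus_spectral_tail:
  "Pi_theta lam \<theta> c = (\<lambda>j. semigrp lam \<theta> c j - spectral_tail lam \<theta> c j)"
  by (auto simp: Pi_theta_def semigrp_def spectral_tail_def)

lemma spectral_tail_smoothing:
  assumes c: "c \<in> DomA lam \<alpha>" and b: "0 \<le> b"
    and decay: "\<And>l. 1 / \<theta>\<^sup>2 \<le> l \<Longrightarrow> l powr \<gamma> * exp (- \<theta> * l) \<le> b"
  shows "spectral_tail lam \<theta> c \<in> DomA lam (\<alpha> + \<gamma>)"
    and "normDA lam (\<alpha> + \<gamma>) (spectral_tail lam \<theta> c) \<le> b * normDA lam \<alpha> c"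
proof -
  have "lam j powr (\<alpha> + \<gamma>) * \<bar>spectral_tail lam \<theta> c j\<bar> \<le> b * (lam j powr \<alpha> * \<bar>c j\<bar>)" for j
  proof (cases "lam j < 1 / \<theta>\<^sup>2")
    case False
    then have "lam j powr \<alpha> * \<bar>c j\<bar> * (lam j powr \<gamma> * exp (- \<theta> * lam j))
                 \<le> lam j powr \<alpha> * \<bar>c j\<bar> * b"
      using decay by (intro mult_left_mono) auto
    then show ?thesis using False by (simp add: spectral_tail_def powr_add abs_mult ac_simps)
  qed (use b in \<open>simp add: spectral_tail_def\<close>)
  from DomA_normDA_le_if_dominated[OF c b this]
  show "spectral_tail lam \<theta> c \<in> DomA lam (\<alpha> + \<gamma>)"
    and "normDA lam (\<alpha> + \<gamma>) (spectral_tail lam \<theta> c) \<le> b * normDA lam \<alpha> c" .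
qed

lemma spectral_tail_L_bound_through:
  assumes "cont_incl (DomA lam (\<alpha> + \<gamma>)) (normDA lam (\<alpha> + \<gamma>)) L nL"
    and "cont_incl L nL (DomA lam \<alpha>) (normDA lam \<alpha>)"
  shows "\<exists>K>0. \<forall>\<theta> b u. 0 \<le> b \<longrightarrow> (\<forall>l. 1 / \<theta>\<^sup>2 \<le> l \<longrightarrow> l powr \<gamma> * exp (- \<theta> * l) \<le> b) \<longrightarrow>
           u \<in> L \<longrightarrow> spectral_tail lam \<theta> u \<in> L \<and> nL (spectral_tail lam \<theta> u) \<le> K * b * nL u"
proof -
  obtain K where "0 < K" and K: "\<forall>f b. 0 \<le> b \<longrightarrow>
      (\<forall>c\<in>DomA lam \<alpha>. f c \<in> DomA lam (\<alpha> + \<gamma>) \<and> normDA lam (\<alpha> + \<gamma>) (f c) \<le> b * normDA lam \<alpha> c) \<longrightarrow>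
      (\<forall>u\<in>L. f u \<in> L \<and> nL (f u) \<le> K * b * nL u)"
    using cont_incl_transfer_bound[OF assms] by blast
  have "spectral_tail lam \<theta> u \<in> L \<and> nL (spectral_tail lam \<theta> u) \<le> K * b * nL u"
    if b: "0 \<le> b" and decay: "\<forall>l. 1 / \<theta>\<^sup>2 \<le> l \<longrightarrow> l powr \<gamma> * exp (- \<theta> * l) \<le> b"
      and u: "u \<in> L" for \<theta> b u
  proof -
    have "\<forall>c\<in>DomA lam \<alpha>. spectral_tail lam \<theta> c \<in> DomA lam (\<alpha> + \<gamma>) \<and>
            normDA lam (\<alpha> + \<gamma>) (spectral_tail lam \<theta> c) \<le> b * normDA lam \<alpha> c"
      using spectral_tail_smoothing[OF _ b] decay by blast
    with K b u show ?thesis by blast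
  qed
  with \<open>0 < K\<close> show ?thesis by blast
qed

lemma spectral_tail_L_bound:
  assumes "(cont_incl (DomA lam \<gamma>) (normDA lam \<gamma>) L nL \<and> cont_incl L nL (DomA lam 0) (normDA lam 0))
         \<or> (cont_incl (DomA lam 0) (normDA lam 0) L nL \<and> cont_incl L nL (DomA lam (- \<gamma>)) (normDA lam (- \<gamma>)))"
  shows "\<exists>K>0. \<forall>\<theta> b u. 0 \<le> b \<longrightarrow> (\<forall>l. 1 / \<theta>\<^sup>2 \<le> l \<longrightarrow> l powr \<gamma> * exp (- \<theta> * l) \<le> b) \<longrightarrow>
           u \<in> L \<longrightarrow> spectral_tail lam \<theta> u \<in> L \<and> nL (spectral_tail lam \<theta> u) \<le> K * b * nL u"
  using assms
proof (elim disjE conjE)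
  assume "cont_incl (DomA lam \<gamma>) (normDA lam \<gamma>) L nL" "cont_incl L nL (DomA lam 0) (normDA lam 0)"
  then show ?thesis using spectral_tail_L_bound_through[of lam 0 \<gamma> L nL] by simp
next
  assume "cont_incl (DomA lam 0) (normDA lam 0) L nL" "cont_incl L nL (DomA lam (- \<gamma>)) (normDA lam (- \<gamma>))"
  then show ?thesis using spectral_tail_L_bound_through[of lam "- \<gamma>" \<gamma> L nL] by simp
qed

lemma spectral_tail_L_small:
  assumes L_incl: "(cont_incl (DomA lam \<gamma>) (normDA lam \<gamma>) L nL \<and> cont_incl L nL (DomA lam 0) (normDA lam 0))
           \<or> (cont_incl (DomA lam 0) (normDA lam 0) L nL \<and> cont_incl L nL (DomA lam (- \<gamma>)) (normDA lam (- \<gamma>)))"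
    and "0 \<le> \<gamma>"
  shows "\<exists>K\<ge>0. \<forall>\<theta>>0. \<forall>u\<in>L.
           spectral_tail lam \<theta> u \<in> L \<and> nL (spectral_tail lam \<theta> u) \<le> K * min \<theta> 1 * nL u"
proof -
  obtain M where "0 \<le> M"
    and M: "\<forall>\<theta>>0. \<forall>l. 1 / \<theta>\<^sup>2 \<le> l \<longrightarrow> l powr \<gamma> * exp (- \<theta> * l) \<le> M * min \<theta> 1"
    using powr_mult_exp_neg_le_min[OF \<open>0 \<le> \<gamma>\<close>] by blast
  obtain K where "0 < K" and K: "\<forall>\<theta> b u. 0 \<le> b \<longrightarrow>
      (\<forall>l. 1 / \<theta>\<^sup>2 \<le> l \<longrightarrow> l powr \<gamma> * exp (- \<theta> * l) \<le> b) \<longrightarrow> u \<in> L \<longrightarrow>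
      spectral_tail lam \<theta> u \<in> L \<and> nL (spectral_tail lam \<theta> u) \<le> K * b * nL u"
    using spectral_tail_L_bound[OF L_incl] by blast
  have "spectral_tail lam \<theta> u \<in> L \<and> nL (spectral_tail lam \<theta> u) \<le> K * M * min \<theta> 1 * nL u"
    if "0 < \<theta>" and "u \<in> L" for \<theta> u
    using K[rule_format, OF _ M[rule_format, OF that(1)] that(2)] \<open>0 \<le> M\<close> that(1)
    by (simp add: mult.assoc)
  moreover have "0 \<le> K * M" using \<open>0 < K\<close> \<open>0 \<le> M\<close> by simp
  ultimately show ?thesis by blast
qed

lemma Pi_theta_L_bound:
  assumes L: "banach_space_on L nL"
    and semigrp: "\<And>\<theta> u. 0 \<le> \<theta> \<Longrightarrow> u \<in> L \<Longrightarrow> semigrp lam \<theta> u \<in> L \<and> nL (semigrp lam \<theta> u) \<le> CL * nL u"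
    and tail: "\<And>\<theta> u. 0 < \<theta> \<Longrightarrow> u \<in> L \<Longrightarrow>
                 spectral_tail lam \<theta> u \<in> L \<and> nL (spectral_tail lam \<theta> u) \<le> B \<theta> * nL u"
    and B_le: "\<And>\<theta>. 0 < \<theta> \<Longrightarrow> B \<theta> \<le> Bmax"
  shows "\<forall>\<theta>>0. \<forall>u\<in>L. Pi_theta lam \<theta> u \<in> L \<and> nL (Pi_theta lam \<theta> u) \<le> (CL + Bmax) * nL u"
proof (intro allI impI ballI)
  fix \<theta> :: real and u assume \<theta>: "0 < \<theta>" and u: "u \<in> L"
  have S: "semigrp lam \<theta> u \<in> L" "nL (semigrp lam \<theta> u) \<le> CL * nL u" using semigrp[of \<theta> u] \<theta> u by auto
  have T: "spectral_tail lam \<theta> u \<in> L" "nL (spectral_tail lam \<theta> u) \<le> B \<theta> * nL u" using tail[OF \<theta> u] by auto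
  have "B \<theta> * nL u \<le> Bmax * nL u"
    using B_le[OF \<theta>] banach_space_on_nonneg[OF L u] by (rule mult_right_mono)
  then show "Pi_theta lam \<theta> u \<in> L \<and> nL (Pi_theta lam \<theta> u) \<le> (CL + Bmax) * nL u"
    using banach_space_on_diff[OF L S(1) T(1)] S(2) T(2)
    by (simp add: Pi_theta_eq_semigrp_minus_spectral_tail[symmetric] distrib_right)
qed

lemma Pi_theta_L_tendsto:
  assumes L: "banach_space_on L nL"
    and semigrp_in: "\<And>\<theta> u. 0 < \<theta> \<Longrightarrow> u \<in> L \<Longrightarrow> semigrp lam \<theta> u \<in> L"
    and semigrp_cont: "\<And>u. u \<in> L \<Longrightarrow> ((\<lambda>\<theta>. nL (\<lambda>j. semigrp lam \<theta> u j - u j)) \<longlongrightarrow> 0) (at_right 0)"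
    and tail: "\<And>\<theta> u. 0 < \<theta> \<Longrightarrow> u \<in> L \<Longrightarrow>
                 spectral_tail lam \<theta> u \<in> L \<and> nL (spectral_tail lam \<theta> u) \<le> B \<theta> * nL u"
    and B: "(B \<longlongrightarrow> 0) (at_right 0)"
  shows "\<forall>u\<in>L. ((\<lambda>\<theta>. nL (\<lambda>j. Pi_theta lam \<theta> u j - u j)) \<longlongrightarrow> 0) (at_right 0)"
proof
  fix u assume u: "u \<in> L"
  have diff: "(\<lambda>j. Pi_theta lam \<theta> u j - u j) \<in> L \<and>
           nL (\<lambda>j. Pi_theta lam \<theta> u j - u j) \<le> nL (\<lambda>j. semigrp lam \<theta> u j - u j) + B \<theta> * nL u"
    if "0 < \<theta>" for \<theta>
  proof -
    have S: "(\<lambda>j. semigrp lam \<theta> u j - u j) \<in> L"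
      by (rule banach_space_on_diff(1)[OF L semigrp_in[OF that u] u])
    have T: "spectral_tail lam \<theta> u \<in> L" "nL (spectral_tail lam \<theta> u) \<le> B \<theta> * nL u"
      using tail[OF that u] by auto
    have "(\<lambda>j. Pi_theta lam \<theta> u j - u j) =
          (\<lambda>j. (\<lambda>j. semigrp lam \<theta> u j - u j) j - spectral_tail lam \<theta> u j)"
      by (simp add: Pi_theta_eq_semigrp_minus_spectral_tail algebra_simps)
    then show ?thesis
      using banach_space_on_diff[OF L S T(1)] T(2) by auto
  qed
  show "((\<lambda>\<theta>. nL (\<lambda>j. Pi_theta lam \<theta> u j - u j)) \<longlongrightarrow> 0) (at_right 0)"
  proof (rule tendsto_sandwich)
    show "eventually (\<lambda>\<theta>. 0 \<le> nL (\<lambda>j. Pi_theta lam \<theta> u j - u j)) (at_right 0)"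
      using eventually_at_right_less[of "0::real"]
      by eventually_elim (use diff banach_space_on_nonneg[OF L] in auto)
    show "eventually (\<lambda>\<theta>. nL (\<lambda>j. Pi_theta lam \<theta> u j - u j) \<le>
            nL (\<lambda>j. semigrp lam \<theta> u j - u j) + B \<theta> * nL u) (at_right 0)"
      using eventually_at_right_less[of "0::real"] by eventually_elim (use diff in auto)
    show "((\<lambda>\<theta>. nL (\<lambda>j. semigrp lam \<theta> u j - u j) + B \<theta> * nL u) \<longlongrightarrow> 0) (at_right 0)"
      using tendsto_add[OF semigrp_cont[OF u] tendsto_mult_left_zero[OF B]] by simp
  qed simp
qed

lemma Pi_theta_L_bounded_tendsto:
  assumes L: "banach_space_on L nL"
    and L_incl: "(cont_incl (DomA lam \<gamma>) (normDA lam \<gamma>) L nL \<and> cont_incl L nL (DomA lam 0) (normDA lam 0))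
           \<or> (cont_incl (DomA lam 0) (normDA lam 0) L nL \<and> cont_incl L nL (DomA lam (- \<gamma>)) (normDA lam (- \<gamma>)))"
    and "0 \<le> \<gamma>"
    and semigrp_bdd: "\<And>\<theta> u. 0 \<le> \<theta> \<Longrightarrow> u \<in> L \<Longrightarrow>
           semigrp lam \<theta> u \<in> L \<and> nL (semigrp lam \<theta> u) \<le> CL * nL u"
    and semigrp_cont: "\<And>u. u \<in> L \<Longrightarrow> ((\<lambda>\<theta>. nL (\<lambda>j. semigrp lam \<theta> u j - u j)) \<longlongrightarrow> 0) (at_right 0)"
  shows "\<exists>C. \<forall>\<theta>>0. \<forall>u\<in>L. Pi_theta lam \<theta> u \<in> L \<and> nL (Pi_theta lam \<theta> u) \<le> C * nL u"
    and "\<forall>u\<in>L. ((\<lambda>\<theta>. nL (\<lambda>j. Pi_theta lam \<theta> u j - u j)) \<longlongrightarrow> 0) (at_right 0)"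
proof -
  obtain K where "0 \<le> K" and K: "\<forall>\<theta>>0. \<forall>u\<in>L.
      spectral_tail lam \<theta> u \<in> L \<and> nL (spectral_tail lam \<theta> u) \<le> K * min \<theta> 1 * nL u"
    using spectral_tail_L_small[OF L_incl \<open>0 \<le> \<gamma>\<close>] by blast
  have tail: "\<And>\<theta> u. 0 < \<theta> \<Longrightarrow> u \<in> L \<Longrightarrow>
      spectral_tail lam \<theta> u \<in> L \<and> nL (spectral_tail lam \<theta> u) \<le> K * min \<theta> 1 * nL u"
    using K by blast
  have B_le: "K * min \<theta> 1 \<le> K" for \<theta> :: real
    using \<open>0 \<le> K\<close> by (simp add: mult_left_le)
  have "((\<lambda>\<theta>. K * min \<theta> 1) \<longlongrightarrow> K * min 0 1) (at_right (0::real))"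
    by (intro tendsto_intros)
  then have B_lim: "((\<lambda>\<theta>. K * min \<theta> 1) \<longlongrightarrow> 0) (at_right 0)" by simp
  have semigrp_in: "semigrp lam \<theta> u \<in> L" if "0 < \<theta>" and "u \<in> L" for \<theta> u
    using semigrp_bdd[of \<theta> u] that by simp
  show "\<exists>C. \<forall>\<theta>>0. \<forall>u\<in>L. Pi_theta lam \<theta> u \<in> L \<and> nL (Pi_theta lam \<theta> u) \<le> C * nL u"
    using Pi_theta_L_bound[OF L semigrp_bdd tail B_le] by blast
  show "\<forall>u\<in>L. ((\<lambda>\<theta>. nL (\<lambda>j. Pi_theta lam \<theta> u j - u j)) \<longlongrightarrow> 0) (at_right 0)"
    by (rule Pi_theta_L_tendsto[OF L semigrp_in semigrp_cont tail B_lim])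
qed

theorem proposition2p2:
  fixes w :: "nat \<Rightarrow> 'h::{real_inner, complete_space}"
    and lam :: "nat \<Rightarrow> real"
    and L :: "coeffs set" and nL :: "coeffs \<Rightarrow> real"
    and \<gamma> :: real
  assumes orthonormal: "\<And>i j. inner (w i) (w j) = (if i = j then 1 else 0)"
    and basis: "closure (span (range w)) = UNIV"
    and lam_pos: "lam 0 > 0"
    and lam_mono: "mono lam"
    and lam_infty: "filterlim lam at_top sequentially"
    and L_banach: "banach_space_on L nL"
    and gamma_pos: "\<gamma> > 0"
    and L_incl: "(cont_incl (DomA lam \<gamma>) (normDA lam \<gamma>) L nL \<and>
                  cont_incl L nL (DomA lam 0) (normDA lam 0))
               \<or> (cont_incl (DomA lam 0) (normDA lam 0) L nL \<and>
                  cont_incl L nL (DomA lam (- \<gamma>)) (normDA lam (- \<gamma>)))"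
    and CL_pos: "CL > 0"
    and semigrp_bdd: "\<And>\<theta> u. \<theta> \<ge> 0 \<Longrightarrow> u \<in> L \<Longrightarrow>
                        semigrp lam \<theta> u \<in> L \<and> nL (semigrp lam \<theta> u) \<le> CL * nL u"
    and semigrp_cont: "\<And>u. u \<in> L \<Longrightarrow>
                        ((\<lambda>\<theta>. nL (\<lambda>j. semigrp lam \<theta> u j - u j)) \<longlongrightarrow> 0) (at_right 0)"
  shows
    \<comment> \<open>(i) range of Pi_theta is in the span of finitely many eigenfunctions\<close>
    "(\<forall>\<theta>>0. \<exists>F. finite F \<and>
        (\<forall>u \<in> L \<union> (\<Union>\<alpha>. DomA lam \<alpha>).
            Pi_theta lam \<theta> u = coeff w (\<Sum>j\<in>F. Pi_theta lam \<theta> u j *\<^sub>R w j) \<and>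
            (\<forall>\<alpha>. Pi_theta lam \<theta> u \<in> DomA lam \<alpha>)))
   \<and>
    \<comment> \<open>(ii) for X = L: uniform boundedness and convergence\<close>
    (\<exists>C. \<forall>\<theta>>0. \<forall>u\<in>L. Pi_theta lam \<theta> u \<in> L \<and> nL (Pi_theta lam \<theta> u) \<le> C * nL u)
   \<and> (\<forall>u\<in>L. ((\<lambda>\<theta>. nL (\<lambda>j. Pi_theta lam \<theta> u j - u j)) \<longlongrightarrow> 0) (at_right 0))
   \<and>
    \<comment> \<open>(ii) for X = D(A^alpha), every real alpha\<close>
    (\<forall>\<alpha>. (\<exists>C. \<forall>\<theta>>0. \<forall>u\<in>DomA lam \<alpha>. Pi_theta lam \<theta> u \<in> DomA lam \<alpha> \<and>
                normDA lam \<alpha> (Pi_theta lam \<theta> u) \<le> C * normDA lam \<alpha> u)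
       \<and> (\<forall>u\<in>DomA lam \<alpha>.
            ((\<lambda>\<theta>. normDA lam \<alpha> (\<lambda>j. Pi_theta lam \<theta> u j - u j)) \<longlongrightarrow> 0) (at_right 0)))"
proof (intro conjI, goal_cases)
  case 1
  show ?case
  proof (intro allI impI exI conjI ballI)
    show "finite {j. lam j < 1 / \<theta>\<^sup>2}" for \<theta> :: real
      using lam_infty by (rule finite_sublevel_if_filterlim_at_top)
    show "Pi_theta lam \<theta> u = coeff w (\<Sum>j\<in>{j. lam j < 1 / \<theta>\<^sup>2}. Pi_theta lam \<theta> u j *\<^sub>R w j)"
      for \<theta> u by (rule Pi_theta_eq_coeff_sum[OF orthonormal lam_infty])
    show "Pi_theta lam \<theta> u \<in> DomA lam \<alpha>" for \<theta> u \<alpha>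
      by (rule Pi_theta_in_DomA[OF lam_infty])
  qed
next
  case 2
  show ?case
    by (rule Pi_theta_L_bounded_tendsto(1)[OF L_banach L_incl _ semigrp_bdd semigrp_cont])
      (use gamma_pos in simp)
next
  case 3
  show ?case
    by (rule Pi_theta_L_bounded_tendsto(2)[OF L_banach L_incl _ semigrp_bdd semigrp_cont])
      (use gamma_pos in simp)
next
  case 4
  have lam_nonneg: "0 \<le> lam j" for j
    using lam_pos monoD[OF lam_mono, of 0 j] by simp
  show ?case
    by (intro allI conjI ballI Pi_theta_DomA_uniformly_bounded[OF lam_nonneg]
        Pi_theta_tendsto_DomA[OF lam_nonneg])
qed

end
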